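(* Let $Z$ be an abelian group, $K$ a group, and $\theta:K\times K\to Z$ a loop cocycle such that $K\ltimes_\theta Z$ is a commutative A-loop. Let $\mu:K\times K\to Z$ be a group cocycle with $\mu(x,y)=\mu(y,x)$ for all $x,y\in K$. Then $K\ltimes_{\mu\theta}Z$ (where $(\mu\theta)(x,y)=\mu(x,y)\theta(x,y)$) is a commutative A-loop, and its left inner mappings $w\mapsto (uv)\backslash(u(vw))$ coincide with those of $K\ltimes_\theta Z$.
   Context: A loop cocycle is a map $\theta:K\times K\to Z$ with $\theta(x,1)=\theta(1,x)=1$ for all $x\in K$; a group cocycle additionally satisfies $\theta(x,y)\theta(xy,z)=\theta(y,z)\theta(x,yz)$. $K\ltimes_\theta Z$ is the loop on $K\times Z$ with $(x,a)(y,b)=(xy,\,ab\,\theta(x,y))$. An A-loop is a loop all of whose inner mappings (elements of the group generated by $L_{x,y}=L_{yx}^{-1}L_yL_x$, $R_{x,y}=R_{xy}^{-1}R_yR_x$, $T_x=L_x^{-1}R_x$) are automorphisms. *)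

theory Defs
  imports "HOL-Algebra.Group"
begin

definition is_loop :: "'a set \<Rightarrow> ('a \<Rightarrow> 'a \<Rightarrow> 'a) \<Rightarrow> 'a \<Rightarrow> bool" where
  "is_loop S m e \<longleftrightarrow> e \<in> S \<and> (\<forall>x\<in>S. \<forall>y\<in>S. m x y \<in> S)
     \<and> (\<forall>x\<in>S. m e x = x \<and> m x e = x)
     \<and> (\<forall>a\<in>S. \<forall>b\<in>S. (\<exists>!x. x \<in> S \<and> m a x = b) \<and> (\<exists>!y. y \<in> S \<and> m y a = b))"

definition ldiv :: "'a set \<Rightarrow> ('a \<Rightarrow> 'a \<Rightarrow> 'a) \<Rightarrow> 'a \<Rightarrow> 'a \<Rightarrow> 'a" where
  "ldiv S m a b = (THE x. x \<in> S \<and> m a x = b)"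

definition rdiv :: "'a set \<Rightarrow> ('a \<Rightarrow> 'a \<Rightarrow> 'a) \<Rightarrow> 'a \<Rightarrow> 'a \<Rightarrow> 'a" where
  "rdiv S m b a = (THE y. y \<in> S \<and> m y a = b)"

text \<open>Inner mappings: L_{x,y} = L_{yx}^{-1} L_y L_x, R_{x,y} = R_{xy}^{-1} R_y R_x,
  T_x = L_x^{-1} R_x, as maps on S (restricted to S).\<close>
definition Lmap :: "'a set \<Rightarrow> ('a \<Rightarrow> 'a \<Rightarrow> 'a) \<Rightarrow> 'a \<Rightarrow> 'a \<Rightarrow> 'a \<Rightarrow> 'a" where
  "Lmap S m x y = (\<lambda>z\<in>S. ldiv S m (m y x) (m y (m x z)))"

definition Rmap :: "'a set \<Rightarrow> ('a \<Rightarrow> 'a \<Rightarrow> 'a) \<Rightarrow> 'a \<Rightarrow> 'a \<Rightarrow> 'a \<Rightarrow> 'a" where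
  "Rmap S m x y = (\<lambda>z\<in>S. rdiv S m (m (m z x) y) (m x y))"

definition Tmap :: "'a set \<Rightarrow> ('a \<Rightarrow> 'a \<Rightarrow> 'a) \<Rightarrow> 'a \<Rightarrow> 'a \<Rightarrow> 'a" where
  "Tmap S m x = (\<lambda>z\<in>S. ldiv S m x (m z x))"

inductive_set inner_maps :: "'a set \<Rightarrow> ('a \<Rightarrow> 'a \<Rightarrow> 'a) \<Rightarrow> ('a \<Rightarrow> 'a) set"
  for S m where
  genL: "x \<in> S \<Longrightarrow> y \<in> S \<Longrightarrow> Lmap S m x y \<in> inner_maps S m"
| genR: "x \<in> S \<Longrightarrow> y \<in> S \<Longrightarrow> Rmap S m x y \<in> inner_maps S m"
| genT: "x \<in> S \<Longrightarrow> Tmap S m x \<in> inner_maps S m"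
| ident: "(\<lambda>z\<in>S. z) \<in> inner_maps S m"
| comp: "f \<in> inner_maps S m \<Longrightarrow> g \<in> inner_maps S m \<Longrightarrow> compose S f g \<in> inner_maps S m"
| inv: "f \<in> inner_maps S m \<Longrightarrow> (\<lambda>z\<in>S. inv_into S f z) \<in> inner_maps S m"

definition is_automorphism :: "'a set \<Rightarrow> ('a \<Rightarrow> 'a \<Rightarrow> 'a) \<Rightarrow> ('a \<Rightarrow> 'a) \<Rightarrow> bool" where
  "is_automorphism S m f \<longleftrightarrow> bij_betw f S S \<and> (\<forall>x\<in>S. \<forall>y\<in>S. f (m x y) = m (f x) (f y))"

definition is_A_loop :: "'a set \<Rightarrow> ('a \<Rightarrow> 'a \<Rightarrow> 'a) \<Rightarrow> 'a \<Rightarrow> bool" where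
  "is_A_loop S m e \<longleftrightarrow> is_loop S m e \<and> (\<forall>f\<in>inner_maps S m. is_automorphism S m f)"

definition is_commutative :: "'a set \<Rightarrow> ('a \<Rightarrow> 'a \<Rightarrow> 'a) \<Rightarrow> bool" where
  "is_commutative S m \<longleftrightarrow> (\<forall>x\<in>S. \<forall>y\<in>S. m x y = m y x)"

definition loop_cocycle :: "('k, 'c) monoid_scheme \<Rightarrow> ('z, 'd) monoid_scheme \<Rightarrow> ('k \<Rightarrow> 'k \<Rightarrow> 'z) \<Rightarrow> bool" where
  "loop_cocycle K Z \<theta> \<longleftrightarrow>
     (\<forall>x\<in>carrier K. \<forall>y\<in>carrier K. \<theta> x y \<in> carrier Z)
   \<and> (\<forall>x\<in>carrier K. \<theta> x \<one>\<^bsub>K\<^esub> = \<one>\<^bsub>Z\<^esub> \<and> \<theta> \<one>\<^bsub>K\<^esub> x = \<one>\<^bsub>Z\<^esub>)"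

definition group_cocycle :: "('k, 'c) monoid_scheme \<Rightarrow> ('z, 'd) monoid_scheme \<Rightarrow> ('k \<Rightarrow> 'k \<Rightarrow> 'z) \<Rightarrow> bool" where
  "group_cocycle K Z \<theta> \<longleftrightarrow> loop_cocycle K Z \<theta> \<and>
     (\<forall>x\<in>carrier K. \<forall>y\<in>carrier K. \<forall>z\<in>carrier K.
        \<theta> x y \<otimes>\<^bsub>Z\<^esub> \<theta> (x \<otimes>\<^bsub>K\<^esub> y) z = \<theta> y z \<otimes>\<^bsub>Z\<^esub> \<theta> x (y \<otimes>\<^bsub>K\<^esub> z))"

definition ext_carrier :: "('k, 'c) monoid_scheme \<Rightarrow> ('z, 'd) monoid_scheme \<Rightarrow> ('k \<times> 'z) set" where
  "ext_carrier K Z = carrier K \<times> carrier Z"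

definition ext_mult :: "('k, 'c) monoid_scheme \<Rightarrow> ('z, 'd) monoid_scheme \<Rightarrow> ('k \<Rightarrow> 'k \<Rightarrow> 'z)
     \<Rightarrow> 'k \<times> 'z \<Rightarrow> 'k \<times> 'z \<Rightarrow> 'k \<times> 'z" where
  "ext_mult K Z \<theta> p q = (fst p \<otimes>\<^bsub>K\<^esub> fst q, (snd p \<otimes>\<^bsub>Z\<^esub> snd q) \<otimes>\<^bsub>Z\<^esub> \<theta> (fst p) (fst q))"

definition ext_one :: "('k, 'c) monoid_scheme \<Rightarrow> ('z, 'd) monoid_scheme \<Rightarrow> 'k \<times> 'z" where
  "ext_one K Z = (\<one>\<^bsub>K\<^esub>, \<one>\<^bsub>Z\<^esub>)"

end

theory Submission
  imports Defs
begin

text \<open>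
  Let Q = K \<ltimes>_\<theta> Z be a commutative A-loop and \<mu> a symmetric group cocycle, and write
  Q' = K \<ltimes>_(\<mu>\<theta>) Z.  The key observation is that every product in Q' is the product in Q
  multiplied by the central element (1, \<mu>(x,y)); we write p\<cdot>(1,d) as shift p d.  From this:

  (1) Q' is a loop, and it is commutative since \<mu> is symmetric.
  (2) The cocycle identity for \<mu> makes the two central corrections in (uv)x and u(vw) agree,
      so Q and Q' have the same left inner mappings L_{u,v}.
  (3) In a commutative loop R_{x,y} = L_{x,y} and T_x = id, so the inner mapping group of a
      commutative loop is generated by its left inner mappings; hence Inn(Q') \<subseteq> Inn(Q).
  (4) Every inner mapping of Q fixes the first coordinate and commutes with all shifts
      ("fibre-equivariant"): this holds for the generators L_{x,y} and is preserved by
      composition and inversion.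
  (5) An automorphism of Q that is fibre-equivariant is an automorphism of Q', because the
      correction factor \<mu>(x,y) only depends on the (preserved) first coordinates.
\<close>

section \<open>Division and inner mappings in loops\<close>

lemma loop_closed:
  assumes "is_loop S m e" "a \<in> S" "b \<in> S"
  shows "m a b \<in> S"
proof -
  have "\<forall>x\<in>S. \<forall>y\<in>S. m x y \<in> S" using assms(1) unfolding is_loop_def by (elim conjE)
  then show ?thesis using assms(2,3) by blast
qed

lemma loop_left_division_unique:
  assumes "is_loop S m e" "a \<in> S" "b \<in> S"
  shows "\<exists>!x. x \<in> S \<and> m a x = b"
proof -
  have "\<forall>a\<in>S. \<forall>b\<in>S. (\<exists>!x. x \<in> S \<and> m a x = b) \<and> (\<exists>!y. y \<in> S \<and> m y a = b)"
    using assms(1) unfolding is_loop_def by (elim conjE)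
  from this[rule_format, OF assms(2,3)] show ?thesis by (rule conjunct1)
qed

lemma loop_ldiv:
  assumes "is_loop S m e" "a \<in> S" "b \<in> S"
  shows "ldiv S m a b \<in> S" and "m a (ldiv S m a b) = b"
proof -
  have "ldiv S m a b \<in> S \<and> m a (ldiv S m a b) = b"
    unfolding ldiv_def by (rule theI'[OF loop_left_division_unique[OF assms]])
  then show "ldiv S m a b \<in> S" and "m a (ldiv S m a b) = b" by auto
qed

lemma loop_ldiv_eq:
  assumes "is_loop S m e" "a \<in> S" "x \<in> S" "m a x = b"
  shows "ldiv S m a b = x"
proof -
  have "b \<in> S" using loop_closed[OF assms(1-3)] assms(4) by simp
  have "x \<in> S \<and> m a x = b" using assms(3,4) by simp
  with loop_left_division_unique[OF assms(1,2) \<open>b \<in> S\<close>] show ?thesis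
    unfolding ldiv_def by (rule the1_equality)
qed

lemma ex1_in_set:
  assumes "w \<in> S" "\<And>x. x \<in> S \<Longrightarrow> P x \<longleftrightarrow> x = w"
  shows "\<exists>!x. x \<in> S \<and> P x"
  using assms by blast

lemma A_loop_automorphism:
  assumes "is_A_loop S m e" "f \<in> inner_maps S m"
  shows "is_automorphism S m f"
proof -
  have "\<forall>f\<in>inner_maps S m. is_automorphism S m f" using assms(1) unfolding is_A_loop_def by (elim conjE)
  then show ?thesis using assms(2) by blast
qed

text \<open>In a commutative loop right and left division coincide, so R_{x,y} = L_{x,y} and
  T_x is the identity; consequently only the left inner mappings matter.\<close>

lemma comm_loop_rdiv_eq_ldiv:
  assumes "is_commutative S m" "a \<in> S"
  shows "rdiv S m b a = ldiv S m a b"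
proof -
  have "(\<lambda>y. y \<in> S \<and> m y a = b) = (\<lambda>y. y \<in> S \<and> m a y = b)"
    using assms unfolding is_commutative_def by auto
  then show ?thesis unfolding rdiv_def ldiv_def by simp
qed

lemma comm_loop_Rmap_eq_Lmap:
  assumes "is_loop S m e" "is_commutative S m" "x \<in> S" "y \<in> S"
  shows "Rmap S m x y = Lmap S m x y"
proof (unfold Rmap_def Lmap_def, intro restrict_ext)
  fix z assume z: "z \<in> S"
  have comm: "\<And>a b. a \<in> S \<Longrightarrow> b \<in> S \<Longrightarrow> m a b = m b a"
    using assms(2) unfolding is_commutative_def by blast
  have "m (m z x) y = m y (m x z)"
    using comm[OF z assms(3)] comm[OF loop_closed[OF assms(1,3) z] assms(4)] by simp
  then show "rdiv S m (m (m z x) y) (m x y) = ldiv S m (m y x) (m y (m x z))"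
    using comm_loop_rdiv_eq_ldiv[OF assms(2) loop_closed[OF assms(1,3,4)]] comm[OF assms(3,4)]
    by simp
qed

lemma comm_loop_Tmap_id:
  assumes "is_loop S m e" "is_commutative S m" "x \<in> S"
  shows "Tmap S m x = (\<lambda>z\<in>S. z)"
proof (unfold Tmap_def, intro restrict_ext)
  fix z assume z: "z \<in> S"
  have "m z x = m x z" using assms(2,3) z unfolding is_commutative_def by blast
  then show "ldiv S m x (m z x) = z" using loop_ldiv_eq[OF assms(1,3) z] by simp
qed

lemma comm_loops_inner_maps_subset:
  assumes loop: "is_loop S m e" and loop': "is_loop S m' e'"
    and comm: "is_commutative S m" and comm': "is_commutative S m'"
    and same_L: "\<And>x y. x \<in> S \<Longrightarrow> y \<in> S \<Longrightarrow> Lmap S m' x y = Lmap S m x y"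
  shows "inner_maps S m' \<subseteq> inner_maps S m"
proof
  fix f assume "f \<in> inner_maps S m'"
  then show "f \<in> inner_maps S m"
  proof (induction rule: inner_maps.induct)
    case (genL x y)
    then show ?case using same_L inner_maps.genL by metis
  next
    case (genR x y)
    then show ?case
      using comm_loop_Rmap_eq_Lmap[OF loop' comm'] comm_loop_Rmap_eq_Lmap[OF loop comm]
        same_L inner_maps.genR by metis
  next
    case (genT x)
    then show ?case using comm_loop_Tmap_id[OF loop' comm'] inner_maps.ident by metis
  next
    case ident
    show ?case by (rule inner_maps.ident)
  next
    case (comp f g)
    show ?case by (rule inner_maps.comp[OF comp.IH])
  next
    case (inv f)
    show ?case by (rule inner_maps.inv[OF inv.IH])
  qed
qed

section \<open>The extension K \<ltimes>_\<phi> Z\<close>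

locale cocycle_extension = K: group K + Z: comm_group Z
  for K :: "('k, 'c) monoid_scheme" and Z :: "('z, 'd) monoid_scheme"
begin

lemma ext_carrier_iff [simp]:
  "p \<in> ext_carrier K Z \<longleftrightarrow> fst p \<in> carrier K \<and> snd p \<in> carrier Z"
  by (cases p) (simp add: ext_carrier_def)

lemma ext_mult_pair [simp]:
  "ext_mult K Z \<phi> (a, b) (c, d) = (a \<otimes>\<^bsub>K\<^esub> c, (b \<otimes>\<^bsub>Z\<^esub> d) \<otimes>\<^bsub>Z\<^esub> \<phi> a c)"
  by (simp add: ext_mult_def)

lemma fst_ext_mult [simp]: "fst (ext_mult K Z \<phi> p q) = fst p \<otimes>\<^bsub>K\<^esub> fst q"
  by (simp add: ext_mult_def)

lemma snd_ext_mult [simp]: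
  "snd (ext_mult K Z \<phi> p q) = (snd p \<otimes>\<^bsub>Z\<^esub> snd q) \<otimes>\<^bsub>Z\<^esub> \<phi> (fst p) (fst q)"
  by (simp add: ext_mult_def)

lemma loop_cocycle_closed [simp]:
  "loop_cocycle K Z \<phi> \<Longrightarrow> x \<in> carrier K \<Longrightarrow> y \<in> carrier K \<Longrightarrow> \<phi> x y \<in> carrier Z"
  unfolding loop_cocycle_def by blast

lemma ext_mult_solve_right:
  assumes "loop_cocycle K Z \<phi>" "a1 \<in> carrier K" "a2 \<in> carrier Z" "b1 \<in> carrier K" "b2 \<in> carrier Z"
    "x1 \<in> carrier K" "x2 \<in> carrier Z"
  shows "ext_mult K Z \<phi> (a1, a2) (x1, x2) = (b1, b2)
     \<longleftrightarrow> x1 = inv\<^bsub>K\<^esub> a1 \<otimes>\<^bsub>K\<^esub> b1 \<and> x2 = b2 \<otimes>\<^bsub>Z\<^esub> inv\<^bsub>Z\<^esub> (a2 \<otimes>\<^bsub>Z\<^esub> \<phi> a1 x1)"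
proof -
  have K_part: "a1 \<otimes>\<^bsub>K\<^esub> x1 = b1 \<longleftrightarrow> x1 = inv\<^bsub>K\<^esub> a1 \<otimes>\<^bsub>K\<^esub> b1"
    using K.inv_solve_left[of x1 a1 b1] assms by metis
  have "(a2 \<otimes>\<^bsub>Z\<^esub> x2) \<otimes>\<^bsub>Z\<^esub> \<phi> a1 x1 = x2 \<otimes>\<^bsub>Z\<^esub> (a2 \<otimes>\<^bsub>Z\<^esub> \<phi> a1 x1)"
    using assms by (simp add: Z.m_ac)
  then have Z_part: "(a2 \<otimes>\<^bsub>Z\<^esub> x2) \<otimes>\<^bsub>Z\<^esub> \<phi> a1 x1 = b2
      \<longleftrightarrow> x2 = b2 \<otimes>\<^bsub>Z\<^esub> inv\<^bsub>Z\<^esub> (a2 \<otimes>\<^bsub>Z\<^esub> \<phi> a1 x1)"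
    using Z.inv_solve_right[of x2 b2 "a2 \<otimes>\<^bsub>Z\<^esub> \<phi> a1 x1"] assms by auto
  show ?thesis by (simp only: ext_mult_pair prod.inject K_part Z_part)
qed

lemma ext_mult_solve_left:
  assumes "loop_cocycle K Z \<phi>" "a1 \<in> carrier K" "a2 \<in> carrier Z" "b1 \<in> carrier K" "b2 \<in> carrier Z"
    "x1 \<in> carrier K" "x2 \<in> carrier Z"
  shows "ext_mult K Z \<phi> (x1, x2) (a1, a2) = (b1, b2)
     \<longleftrightarrow> x1 = b1 \<otimes>\<^bsub>K\<^esub> inv\<^bsub>K\<^esub> a1 \<and> x2 = b2 \<otimes>\<^bsub>Z\<^esub> inv\<^bsub>Z\<^esub> (a2 \<otimes>\<^bsub>Z\<^esub> \<phi> x1 a1)"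
proof -
  have K_part: "x1 \<otimes>\<^bsub>K\<^esub> a1 = b1 \<longleftrightarrow> x1 = b1 \<otimes>\<^bsub>K\<^esub> inv\<^bsub>K\<^esub> a1"
    using K.inv_solve_right[of x1 b1 a1] assms by metis
  have "(x2 \<otimes>\<^bsub>Z\<^esub> a2) \<otimes>\<^bsub>Z\<^esub> \<phi> x1 a1 = x2 \<otimes>\<^bsub>Z\<^esub> (a2 \<otimes>\<^bsub>Z\<^esub> \<phi> x1 a1)"
    using assms by (simp add: Z.m_ac)
  then have Z_part: "(x2 \<otimes>\<^bsub>Z\<^esub> a2) \<otimes>\<^bsub>Z\<^esub> \<phi> x1 a1 = b2
      \<longleftrightarrow> x2 = b2 \<otimes>\<^bsub>Z\<^esub> inv\<^bsub>Z\<^esub> (a2 \<otimes>\<^bsub>Z\<^esub> \<phi> x1 a1)"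
    using Z.inv_solve_right[of x2 b2 "a2 \<otimes>\<^bsub>Z\<^esub> \<phi> x1 a1"] assms by auto
  show ?thesis by (simp only: ext_mult_pair prod.inject K_part Z_part)
qed

lemma ext_loop:
  assumes phi: "loop_cocycle K Z \<phi>"
  shows "is_loop (ext_carrier K Z) (ext_mult K Z \<phi>) (ext_one K Z)"
  unfolding is_loop_def
proof (intro conjI ballI)
  let ?S = "ext_carrier K Z" and ?m = "ext_mult K Z \<phi>"
  show "ext_one K Z \<in> ?S" by (simp add: ext_one_def)
  fix a b assume a: "a \<in> ?S" and b: "b \<in> ?S"
  show "?m a b \<in> ?S" using phi a b by simp
  show "?m (ext_one K Z) a = a" "?m a (ext_one K Z) = a"
    using phi a unfolding loop_cocycle_def by (auto simp: ext_mult_def ext_one_def)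
  obtain a1 a2 b1 b2 where ab: "a = (a1, a2)" "b = (b1, b2)" by fastforce
  have carriers: "a1 \<in> carrier K" "a2 \<in> carrier Z" "b1 \<in> carrier K" "b2 \<in> carrier Z"
    using a b ab by auto
  define l1 where "l1 = inv\<^bsub>K\<^esub> a1 \<otimes>\<^bsub>K\<^esub> b1"
  show "\<exists>!x. x \<in> ?S \<and> ?m a x = b"
  proof (rule ex1_in_set[of "(l1, b2 \<otimes>\<^bsub>Z\<^esub> inv\<^bsub>Z\<^esub> (a2 \<otimes>\<^bsub>Z\<^esub> \<phi> a1 l1))"])
    show "(l1, b2 \<otimes>\<^bsub>Z\<^esub> inv\<^bsub>Z\<^esub> (a2 \<otimes>\<^bsub>Z\<^esub> \<phi> a1 l1)) \<in> ?S"
      using phi carriers by (simp add: l1_def)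
    fix x assume "x \<in> ?S"
    then show "?m a x = b \<longleftrightarrow> x = (l1, b2 \<otimes>\<^bsub>Z\<^esub> inv\<^bsub>Z\<^esub> (a2 \<otimes>\<^bsub>Z\<^esub> \<phi> a1 l1))"
      using ext_mult_solve_right[OF phi carriers(1,2,3,4), of "fst x" "snd x"] ab
      by (cases x) (auto simp: l1_def)
  qed
  define r1 where "r1 = b1 \<otimes>\<^bsub>K\<^esub> inv\<^bsub>K\<^esub> a1"
  show "\<exists>!y. y \<in> ?S \<and> ?m y a = b"
  proof (rule ex1_in_set[of "(r1, b2 \<otimes>\<^bsub>Z\<^esub> inv\<^bsub>Z\<^esub> (a2 \<otimes>\<^bsub>Z\<^esub> \<phi> r1 a1))"])
    show "(r1, b2 \<otimes>\<^bsub>Z\<^esub> inv\<^bsub>Z\<^esub> (a2 \<otimes>\<^bsub>Z\<^esub> \<phi> r1 a1)) \<in> ?S"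
      using phi carriers by (simp add: r1_def)
    fix y assume "y \<in> ?S"
    then show "?m y a = b \<longleftrightarrow> y = (r1, b2 \<otimes>\<^bsub>Z\<^esub> inv\<^bsub>Z\<^esub> (a2 \<otimes>\<^bsub>Z\<^esub> \<phi> r1 a1))"
      using ext_mult_solve_left[OF phi carriers(1,2,3,4), of "fst y" "snd y"] ab
      by (cases y) (auto simp: r1_def)
  qed
qed

lemma loop_cocycle_product:
  assumes "loop_cocycle K Z \<mu>" "loop_cocycle K Z \<theta>"
  shows "loop_cocycle K Z (\<lambda>x y. \<mu> x y \<otimes>\<^bsub>Z\<^esub> \<theta> x y)"
  using assms unfolding loop_cocycle_def by auto

lemma ext_commutative_iff:
  assumes phi: "loop_cocycle K Z \<phi>"
  shows "is_commutative (ext_carrier K Z) (ext_mult K Z \<phi>)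
     \<longleftrightarrow> (\<forall>x\<in>carrier K. \<forall>y\<in>carrier K. x \<otimes>\<^bsub>K\<^esub> y = y \<otimes>\<^bsub>K\<^esub> x \<and> \<phi> x y = \<phi> y x)"
proof
  assume comm: "is_commutative (ext_carrier K Z) (ext_mult K Z \<phi>)"
  show "\<forall>x\<in>carrier K. \<forall>y\<in>carrier K. x \<otimes>\<^bsub>K\<^esub> y = y \<otimes>\<^bsub>K\<^esub> x \<and> \<phi> x y = \<phi> y x"
  proof (intro ballI)
    fix x y assume "x \<in> carrier K" "y \<in> carrier K"
    then have "ext_mult K Z \<phi> (x, \<one>\<^bsub>Z\<^esub>) (y, \<one>\<^bsub>Z\<^esub>) = ext_mult K Z \<phi> (y, \<one>\<^bsub>Z\<^esub>) (x, \<one>\<^bsub>Z\<^esub>)"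
      using comm unfolding is_commutative_def by (simp del: ext_mult_pair)
    then show "x \<otimes>\<^bsub>K\<^esub> y = y \<otimes>\<^bsub>K\<^esub> x \<and> \<phi> x y = \<phi> y x"
      using phi \<open>x \<in> carrier K\<close> \<open>y \<in> carrier K\<close> by simp
  qed
next
  assume "\<forall>x\<in>carrier K. \<forall>y\<in>carrier K. x \<otimes>\<^bsub>K\<^esub> y = y \<otimes>\<^bsub>K\<^esub> x \<and> \<phi> x y = \<phi> y x"
  then show "is_commutative (ext_carrier K Z) (ext_mult K Z \<phi>)"
    unfolding is_commutative_def by (auto simp: ext_mult_def Z.m_comm)
qed

definition shift :: "'k \<times> 'z \<Rightarrow> 'z \<Rightarrow> 'k \<times> 'z" where
  "shift p d = (fst p, snd p \<otimes>\<^bsub>Z\<^esub> d)"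

lemma fst_shift [simp]: "fst (shift p d) = fst p"
  by (simp add: shift_def)

lemma snd_shift [simp]: "snd (shift p d) = snd p \<otimes>\<^bsub>Z\<^esub> d"
  by (simp add: shift_def)

lemma shift_closed:
  "p \<in> ext_carrier K Z \<Longrightarrow> d \<in> carrier Z \<Longrightarrow> shift p d \<in> ext_carrier K Z"
  by (simp add: shift_def)

lemma shift_shift:
  "p \<in> ext_carrier K Z \<Longrightarrow> a \<in> carrier Z \<Longrightarrow> b \<in> carrier Z
    \<Longrightarrow> shift (shift p a) b = shift p (a \<otimes>\<^bsub>Z\<^esub> b)"
  by (simp add: shift_def Z.m_assoc)

lemma ext_mult_shift_left:
  assumes "loop_cocycle K Z \<phi>" "p \<in> ext_carrier K Z" "q \<in> ext_carrier K Z" "d \<in> carrier Z"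
  shows "ext_mult K Z \<phi> (shift p d) q = shift (ext_mult K Z \<phi> p q) d"
  using assms by (simp add: shift_def ext_mult_def Z.m_ac)

lemma ext_mult_shift_right:
  assumes "loop_cocycle K Z \<phi>" "p \<in> ext_carrier K Z" "q \<in> ext_carrier K Z" "d \<in> carrier Z"
  shows "ext_mult K Z \<phi> p (shift q d) = shift (ext_mult K Z \<phi> p q) d"
  using assms by (simp add: shift_def ext_mult_def Z.m_ac)

lemma ext_mult_twist:
  assumes "loop_cocycle K Z \<mu>" "loop_cocycle K Z \<theta>" "p \<in> ext_carrier K Z" "q \<in> ext_carrier K Z"
  shows "ext_mult K Z (\<lambda>x y. \<mu> x y \<otimes>\<^bsub>Z\<^esub> \<theta> x y) p q
       = shift (ext_mult K Z \<theta> p q) (\<mu> (fst p) (fst q))"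
  using assms by (simp add: shift_def ext_mult_def Z.m_ac)

text \<open>If (uv)x = u(vw)
  in K \<ltimes>_\<theta> Z, then x has first coordinate w, and in the twisted loop both sides acquire
  the central factors \<mu>(u,v)\<mu>(uv,w) and \<mu>(v,w)\<mu>(u,vw), which agree by the cocycle identity.\<close>

lemma twist_Lmap_eq:
  assumes mu: "group_cocycle K Z \<mu>" and theta: "loop_cocycle K Z \<theta>"
    and u: "u \<in> ext_carrier K Z" and v: "v \<in> ext_carrier K Z" and w: "w \<in> ext_carrier K Z"
  defines "m \<equiv> ext_mult K Z \<theta>" and "m' \<equiv> ext_mult K Z (\<lambda>x y. \<mu> x y \<otimes>\<^bsub>Z\<^esub> \<theta> x y)"
  shows "ldiv (ext_carrier K Z) m' (m' u v) (m' u (m' v w))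
       = ldiv (ext_carrier K Z) m (m u v) (m u (m v w))"
proof -
  let ?S = "ext_carrier K Z"
  have mu_loop: "loop_cocycle K Z \<mu>" using mu unfolding group_cocycle_def by blast
  have loop: "is_loop ?S m (ext_one K Z)" unfolding m_def by (rule ext_loop[OF theta])
  have loop': "is_loop ?S m' (ext_one K Z)"
    unfolding m'_def by (rule ext_loop[OF loop_cocycle_product[OF mu_loop theta]])
  have cocycle: "\<mu> (fst u) (fst v) \<otimes>\<^bsub>Z\<^esub> \<mu> (fst u \<otimes>\<^bsub>K\<^esub> fst v) (fst w)
      = \<mu> (fst v) (fst w) \<otimes>\<^bsub>Z\<^esub> \<mu> (fst u) (fst v \<otimes>\<^bsub>K\<^esub> fst w)"
    using mu u v w unfolding group_cocycle_def by simp
  define x where "x = ldiv ?S m (m u v) (m u (m v w))"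
  have x: "x \<in> ?S" and x_eq: "m (m u v) x = m u (m v w)"
    using loop_ldiv[OF loop] loop_closed[OF loop] u v w unfolding x_def by auto
  have "(fst u \<otimes>\<^bsub>K\<^esub> fst v) \<otimes>\<^bsub>K\<^esub> fst x = (fst u \<otimes>\<^bsub>K\<^esub> fst v) \<otimes>\<^bsub>K\<^esub> fst w"
    using arg_cong[OF x_eq, of fst] u v w by (simp add: m_def K.m_assoc)
  then have fst_x: "fst x = fst w" using u v w x by simp
  have "m' (m' u v) x = shift (m (m u v) x) (\<mu> (fst u) (fst v) \<otimes>\<^bsub>Z\<^esub> \<mu> (fst u \<otimes>\<^bsub>K\<^esub> fst v) (fst w))"
    using u v x fst_x theta mu_loop
    by (simp add: m_def m'_def ext_mult_twist ext_mult_shift_left shift_shift)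
  also have "\<dots> = shift (m u (m v w)) (\<mu> (fst v) (fst w) \<otimes>\<^bsub>Z\<^esub> \<mu> (fst u) (fst v \<otimes>\<^bsub>K\<^esub> fst w))"
    using x_eq cocycle by simp
  also have "\<dots> = m' u (m' v w)"
    using u v w theta mu_loop
    by (simp add: m_def m'_def ext_mult_twist ext_mult_shift_right shift_shift)
  finally have "m' (m' u v) x = m' u (m' v w)" .
  then show ?thesis
    unfolding x_def[symmetric] using loop_ldiv_eq[OF loop'] loop_closed[OF loop'] u v x by blast
qed

text \<open>This is the invariant carried through the inner
  mapping group in step (4).\<close>

definition fibre_equivariant :: "('k \<times> 'z \<Rightarrow> 'k \<times> 'z) \<Rightarrow> bool" where
  "fibre_equivariant f \<longleftrightarrow>
     (\<forall>p\<in>ext_carrier K Z. f p \<in> ext_carrier K Z \<and> fst (f p) = fst p)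
   \<and> (\<forall>p\<in>ext_carrier K Z. \<forall>d\<in>carrier Z. f (shift p d) = shift (f p) d)"

lemma fibre_equivariantD:
  assumes "fibre_equivariant f" "p \<in> ext_carrier K Z"
  shows "f p \<in> ext_carrier K Z" "fst (f p) = fst p"
    and "d \<in> carrier Z \<Longrightarrow> f (shift p d) = shift (f p) d"
  using assms unfolding fibre_equivariant_def by auto

lemma fibre_equivariant_id: "fibre_equivariant (\<lambda>z\<in>ext_carrier K Z. z)"
  unfolding fibre_equivariant_def by simp

lemma fibre_equivariant_compose:
  assumes f: "fibre_equivariant f" and g: "fibre_equivariant g"
  shows "fibre_equivariant (compose (ext_carrier K Z) f g)"
  using fibre_equivariantD[OF f] fibre_equivariantD[OF g]
  unfolding fibre_equivariant_def compose_def by simp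

lemma fibre_equivariant_inv:
  assumes f: "fibre_equivariant f" and bij: "bij_betw f (ext_carrier K Z) (ext_carrier K Z)"
  shows "fibre_equivariant (\<lambda>z\<in>ext_carrier K Z. inv_into (ext_carrier K Z) f z)"
proof -
  let ?S = "ext_carrier K Z" and ?g = "inv_into (ext_carrier K Z) f"
  have g: "?g p \<in> ?S" "f (?g p) = p" if "p \<in> ?S" for p
    using bij_betwE[OF bij_betw_inv_into[OF bij]] bij_betw_inv_into_right[OF bij] that by auto
  have fst_g: "fst (?g p) = fst p" if "p \<in> ?S" for p
    using fibre_equivariantD(2)[OF f g(1)[OF that]] g(2)[OF that] by simp
  have "?g (shift p d) = shift (?g p) d" if "p \<in> ?S" "d \<in> carrier Z" for p d
  proof -
    have "f (shift (?g p) d) = shift p d"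
      using fibre_equivariantD(3)[OF f g(1)] g that by simp
    then show ?thesis
      using bij_betw_inv_into_left[OF bij shift_closed[OF g(1)[OF that(1)] that(2)]] by simp
  qed
  then show ?thesis
    using g fst_g unfolding fibre_equivariant_def by simp
qed

text \<open>The left inner mappings L_{x,y} of K \<ltimes>_\<theta> Z are fibre-equivariant: the K-coordinate of
  (yx)\<setminus>(y(xp)) is that of p since K is a group, and a shift of p passes through all products.\<close>

lemma fibre_equivariant_Lmap:
  assumes theta: "loop_cocycle K Z \<theta>" and x: "x \<in> ext_carrier K Z" and y: "y \<in> ext_carrier K Z"
  shows "fibre_equivariant (Lmap (ext_carrier K Z) (ext_mult K Z \<theta>) x y)"
proof -
  let ?S = "ext_carrier K Z" and ?m = "ext_mult K Z \<theta>"
  have loop: "is_loop ?S ?m (ext_one K Z)" by (rule ext_loop[OF theta])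
  have yx: "?m y x \<in> ?S" using theta x y by simp
  define L where "L p = ldiv ?S ?m (?m y x) (?m y (?m x p))" for p
  have L: "L p \<in> ?S" "?m (?m y x) (L p) = ?m y (?m x p)" if "p \<in> ?S" for p
    using loop_ldiv[OF loop yx] theta x y that unfolding L_def by auto
  have fst_L: "fst (L p) = fst p" if p: "p \<in> ?S" for p
  proof -
    have "(fst y \<otimes>\<^bsub>K\<^esub> fst x) \<otimes>\<^bsub>K\<^esub> fst (L p) = (fst y \<otimes>\<^bsub>K\<^esub> fst x) \<otimes>\<^bsub>K\<^esub> fst p"
      using arg_cong[OF L(2)[OF p], of fst] x y p by (simp add: K.m_assoc)
    then show ?thesis using x y p L(1)[OF p] by simp
  qed
  have "L (shift p d) = shift (L p) d" if p: "p \<in> ?S" and d: "d \<in> carrier Z" for p d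
  proof -
    have "?m (?m y x) (shift (L p) d) = ?m y (?m x (shift p d))"
      using theta x y p d L[OF p] by (simp add: ext_mult_shift_right)
    from loop_ldiv_eq[OF loop yx shift_closed[OF L(1)[OF p] d] this]
    show ?thesis by (simp only: L_def)
  qed
  then show ?thesis
    using L(1) fst_L unfolding fibre_equivariant_def Lmap_def L_def by simp
qed

text \<open>Step (4): all inner mappings of a commutative A-loop K \<ltimes>_\<theta> Z are fibre-equivariant
  (the A-loop property supplies the bijectivity needed for inverses).\<close>

lemma fibre_equivariant_inner_maps:
  assumes theta: "loop_cocycle K Z \<theta>"
    and A_loop: "is_A_loop (ext_carrier K Z) (ext_mult K Z \<theta>) (ext_one K Z)"
    and comm: "is_commutative (ext_carrier K Z) (ext_mult K Z \<theta>)"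
    and f: "f \<in> inner_maps (ext_carrier K Z) (ext_mult K Z \<theta>)"
  shows "fibre_equivariant f"
  using f
proof (induction rule: inner_maps.induct)
  case (genL x y)
  then show ?case by (rule fibre_equivariant_Lmap[OF theta])
next
  case (genR x y)
  then show ?case
    using comm_loop_Rmap_eq_Lmap[OF ext_loop[OF theta] comm] fibre_equivariant_Lmap[OF theta]
    by simp
next
  case (genT x)
  then have "Tmap (ext_carrier K Z) (ext_mult K Z \<theta>) x = (\<lambda>z\<in>ext_carrier K Z. z)"
    by (rule comm_loop_Tmap_id[OF ext_loop[OF theta] comm])
  then show ?case by (simp only: fibre_equivariant_id)
next
  case ident
  show ?case by (rule fibre_equivariant_id)
next
  case (comp f g)
  show ?case by (rule fibre_equivariant_compose[OF comp.IH])
next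
  case (inv f)
  have "bij_betw f (ext_carrier K Z) (ext_carrier K Z)"
    using A_loop_automorphism[OF A_loop inv.hyps] unfolding is_automorphism_def by blast
  with inv.IH show ?case by (rule fibre_equivariant_inv)
qed

lemma twist_automorphism:
  assumes mu: "loop_cocycle K Z \<mu>" and theta: "loop_cocycle K Z \<theta>"
    and aut: "is_automorphism (ext_carrier K Z) (ext_mult K Z \<theta>) f"
    and equiv: "fibre_equivariant f"
  shows "is_automorphism (ext_carrier K Z) (ext_mult K Z (\<lambda>x y. \<mu> x y \<otimes>\<^bsub>Z\<^esub> \<theta> x y)) f"
proof -
  let ?S = "ext_carrier K Z" and ?m = "ext_mult K Z \<theta>"
  have hom: "f (?m p q) = ?m (f p) (f q)" if "p \<in> ?S" "q \<in> ?S" for p q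
    using aut that unfolding is_automorphism_def by blast
  have "f (shift (?m p q) (\<mu> (fst p) (fst q))) = shift (?m (f p) (f q)) (\<mu> (fst (f p)) (fst (f q)))"
    if "p \<in> ?S" "q \<in> ?S" for p q
    using fibre_equivariantD[OF equiv] hom that mu theta by simp
  then show ?thesis
    using aut fibre_equivariantD(1)[OF equiv] mu theta
    unfolding is_automorphism_def by (simp add: ext_mult_twist)
qed

lemma twist_commutative:
  assumes mu: "loop_cocycle K Z \<mu>" and theta: "loop_cocycle K Z \<theta>"
    and comm: "is_commutative (ext_carrier K Z) (ext_mult K Z \<theta>)"
    and sym: "\<forall>x\<in>carrier K. \<forall>y\<in>carrier K. \<mu> x y = \<mu> y x"
  shows "is_commutative (ext_carrier K Z) (ext_mult K Z (\<lambda>x y. \<mu> x y \<otimes>\<^bsub>Z\<^esub> \<theta> x y))"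
  using comm sym ext_commutative_iff[OF theta] ext_commutative_iff[OF loop_cocycle_product[OF mu theta]]
  by simp

lemma twist_A_loop:
  assumes mu: "group_cocycle K Z \<mu>" and theta: "loop_cocycle K Z \<theta>"
    and A_loop: "is_A_loop (ext_carrier K Z) (ext_mult K Z \<theta>) (ext_one K Z)"
    and comm: "is_commutative (ext_carrier K Z) (ext_mult K Z \<theta>)"
    and sym: "\<forall>x\<in>carrier K. \<forall>y\<in>carrier K. \<mu> x y = \<mu> y x"
  shows "is_A_loop (ext_carrier K Z) (ext_mult K Z (\<lambda>x y. \<mu> x y \<otimes>\<^bsub>Z\<^esub> \<theta> x y)) (ext_one K Z)"
proof -
  let ?S = "ext_carrier K Z" and ?m = "ext_mult K Z \<theta>"
    and ?m' = "ext_mult K Z (\<lambda>x y. \<mu> x y \<otimes>\<^bsub>Z\<^esub> \<theta> x y)"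
  have mu_loop: "loop_cocycle K Z \<mu>" using mu unfolding group_cocycle_def by blast
  have loop': "is_loop ?S ?m' (ext_one K Z)"
    by (rule ext_loop[OF loop_cocycle_product[OF mu_loop theta]])
  have same_L: "Lmap ?S ?m' x y = Lmap ?S ?m x y" if "x \<in> ?S" "y \<in> ?S" for x y
    unfolding Lmap_def using twist_Lmap_eq[OF mu theta that(2,1)] by (intro restrict_ext) simp
  have inner: "inner_maps ?S ?m' \<subseteq> inner_maps ?S ?m"
    using comm_loops_inner_maps_subset[OF ext_loop[OF theta] loop' comm
        twist_commutative[OF mu_loop theta comm sym] same_L] .
  show ?thesis
    unfolding is_A_loop_def
  proof (intro conjI ballI loop')
    fix f assume "f \<in> inner_maps ?S ?m'"
    then have f: "f \<in> inner_maps ?S ?m" using inner by blast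
    then have "is_automorphism ?S ?m f" by (rule A_loop_automorphism[OF A_loop])
    then show "is_automorphism ?S ?m' f"
      by (rule twist_automorphism[OF mu_loop theta _ fibre_equivariant_inner_maps[OF theta A_loop comm f]])
  qed
qed

end

theorem lemma4p11:
  fixes K :: "('k, 'c) monoid_scheme" and Z :: "('z, 'd) monoid_scheme"
    and \<theta> \<mu> :: "'k \<Rightarrow> 'k \<Rightarrow> 'z"
  assumes "group K" and "comm_group Z"
    and "loop_cocycle K Z \<theta>"
    and "is_A_loop (ext_carrier K Z) (ext_mult K Z \<theta>) (ext_one K Z)"
    and "is_commutative (ext_carrier K Z) (ext_mult K Z \<theta>)"
    and "group_cocycle K Z \<mu>"
    and "\<forall>x\<in>carrier K. \<forall>y\<in>carrier K. \<mu> x y = \<mu> y x"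
  shows "is_A_loop (ext_carrier K Z) (ext_mult K Z (\<lambda>x y. \<mu> x y \<otimes>\<^bsub>Z\<^esub> \<theta> x y)) (ext_one K Z)
       \<and> is_commutative (ext_carrier K Z) (ext_mult K Z (\<lambda>x y. \<mu> x y \<otimes>\<^bsub>Z\<^esub> \<theta> x y))
       \<and> (\<forall>u\<in>ext_carrier K Z. \<forall>v\<in>ext_carrier K Z. \<forall>w\<in>ext_carrier K Z.
            (let S = ext_carrier K Z; m = ext_mult K Z (\<lambda>x y. \<mu> x y \<otimes>\<^bsub>Z\<^esub> \<theta> x y);
                 m0 = ext_mult K Z \<theta>
             in ldiv S m (m u v) (m u (m v w)) = ldiv S m0 (m0 u v) (m0 u (m0 v w))))"
proof -
  interpret cocycle_extension K Z using assms(1,2) by (simp add: cocycle_extension_def)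
  have mu: "loop_cocycle K Z \<mu>" using assms(6) unfolding group_cocycle_def by blast
  have same_left_division:
    "\<forall>u\<in>ext_carrier K Z. \<forall>v\<in>ext_carrier K Z. \<forall>w\<in>ext_carrier K Z.
      ldiv (ext_carrier K Z) (ext_mult K Z (\<lambda>x y. \<mu> x y \<otimes>\<^bsub>Z\<^esub> \<theta> x y))
        (ext_mult K Z (\<lambda>x y. \<mu> x y \<otimes>\<^bsub>Z\<^esub> \<theta> x y) u v)
        (ext_mult K Z (\<lambda>x y. \<mu> x y \<otimes>\<^bsub>Z\<^esub> \<theta> x y) u (ext_mult K Z (\<lambda>x y. \<mu> x y \<otimes>\<^bsub>Z\<^esub> \<theta> x y) v w))
      = ldiv (ext_carrier K Z) (ext_mult K Z \<theta>) (ext_mult K Z \<theta> u v)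
          (ext_mult K Z \<theta> u (ext_mult K Z \<theta> v w))"
    using twist_Lmap_eq[OF assms(6,3)] by simp
  show ?thesis
    unfolding Let_def
    by (intro conjI same_left_division twist_A_loop[OF assms(6,3,4,5,7)]
        twist_commutative[OF mu assms(3,5,7)])
qed

end
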